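(* If $\beta_1>\beta_0$ and $\beta_2>\beta_0$, then the shape process $H^3$ is ergodic (positive recurrent).
   Context: For $\beta=(\beta_0,\beta_1,\beta_2)\in(0,\infty)^3$: for $x\in\mathbb{N}^3$, with zero boundary convention $x(0)=x(4)=0$, let $V_j(x)=\mathbf 1_{\{x(j-1)>x(j)\}}+\mathbf 1_{\{x(j+1)>x(j)\}}$. The crystal process $X^3$ is the continuous-time Markov chain on $\mathbb{N}^3$ jumping from $x$ to $x+e_j$ at rate $\beta_{V_j(x)}$ ($j=1,2,3$), no other transitions; the shape process is $H^3_t=(X^3_t(1)-X^3_t(2),X^3_t(2)-X^3_t(3))\in\mathbb{Z}^2$. *)

theory Defs
  imports "HOL-Analysis.Analysis"
begin

text \<open>Positive recurrence is expressed via the embedded jump chain and the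
  exponential holding times: the expected return time
  m_x = E_x[T_x], T_x = inf{t \<ge> J_1. X_t = x}, equals the sum over all
  first-return jump paths x, y_1, ..., y_n = x of the path probability
  times the sum of the mean holding times 1/q(x), 1/q(y_1), ..., 1/q(y_(n-1)).\<close>

definition total_rate :: "('a \<Rightarrow> 'a \<Rightarrow> real) \<Rightarrow> 'a \<Rightarrow> ennreal" where
  "total_rate Q x = (\<Sum>\<^sub>\<infinity> y \<in> - {x}. ennreal (Q x y))"

definition jump_prob :: "('a \<Rightarrow> 'a \<Rightarrow> real) \<Rightarrow> 'a \<Rightarrow> 'a \<Rightarrow> ennreal" where
  "jump_prob Q x y = (if y = x then 0 else ennreal (Q x y) / total_rate Q x)"

fun path_prob :: "('a \<Rightarrow> 'a \<Rightarrow> real) \<Rightarrow> 'a \<Rightarrow> 'a list \<Rightarrow> ennreal" where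
  "path_prob Q x [] = 1"
| "path_prob Q x (y # ys) = jump_prob Q x y * path_prob Q y ys"

definition holding_time_sum :: "('a \<Rightarrow> 'a \<Rightarrow> real) \<Rightarrow> 'a \<Rightarrow> 'a list \<Rightarrow> ennreal" where
  "holding_time_sum Q x ys = (\<Sum>z \<leftarrow> x # butlast ys. 1 / total_rate Q z)"

text \<open>First-return jump paths from x (the states visited after x).\<close>
definition return_paths :: "'a \<Rightarrow> 'a list set" where
  "return_paths x = {ys. ys \<noteq> [] \<and> last ys = x \<and> x \<notin> set (butlast ys)}"

definition return_prob :: "('a \<Rightarrow> 'a \<Rightarrow> real) \<Rightarrow> 'a \<Rightarrow> ennreal" where
  "return_prob Q x = (\<Sum>\<^sub>\<infinity> ys \<in> return_paths x. path_prob Q x ys)"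

definition mean_return_time :: "('a \<Rightarrow> 'a \<Rightarrow> real) \<Rightarrow> 'a \<Rightarrow> ennreal" where
  "mean_return_time Q x =
     (\<Sum>\<^sub>\<infinity> ys \<in> return_paths x. path_prob Q x ys * holding_time_sum Q x ys)"

definition positive_recurrent_state :: "('a \<Rightarrow> 'a \<Rightarrow> real) \<Rightarrow> 'a \<Rightarrow> bool" where
  "positive_recurrent_state Q x \<longleftrightarrow> return_prob Q x = 1 \<and> mean_return_time Q x < \<infinity>"

definition ctmc_irreducible :: "('a \<Rightarrow> 'a \<Rightarrow> real) \<Rightarrow> bool" where
  "ctmc_irreducible Q \<longleftrightarrow> (\<forall>x y. (x, y) \<in> {(a, b). a \<noteq> b \<and> Q a b > 0}\<^sup>*)"

definition ctmc_ergodic :: "('a \<Rightarrow> 'a \<Rightarrow> real) \<Rightarrow> bool" where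
  "ctmc_ergodic Q \<longleftrightarrow> ctmc_irreducible Q \<and> (\<forall>x. positive_recurrent_state Q x)"

type_synonym cstate = "nat \<times> nat \<times> nat"

text \<open>Coordinates x(1), x(2), x(3) with boundary convention x(0) = x(4) = 0.\<close>
definition coord :: "cstate \<Rightarrow> nat \<Rightarrow> nat" where
  "coord x j = (case x of (a, b, c) \<Rightarrow>
      (if j = 1 then a else if j = 2 then b else if j = 3 then c else 0))"

definition V :: "cstate \<Rightarrow> nat \<Rightarrow> nat" where
  "V x j = of_bool (coord x (j - 1) > coord x j) + of_bool (coord x (j + 1) > coord x j)"

definition add_e :: "cstate \<Rightarrow> nat \<Rightarrow> cstate" where
  "add_e x j = (case x of (a, b, c) \<Rightarrow>
      (if j = 1 then (a + 1, b, c) else if j = 2 then (a, b + 1, c) else (a, b, c + 1)))"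

definition crystal_Q :: "(nat \<Rightarrow> real) \<Rightarrow> cstate \<Rightarrow> cstate \<Rightarrow> real" where
  "crystal_Q \<beta> x y = (\<Sum>j\<in>{1, 2, 3}. if y = add_e x j then \<beta> (V x j) else 0)"

definition shape :: "cstate \<Rightarrow> int \<times> int" where
  "shape x = (int (coord x 1) - int (coord x 2), int (coord x 2) - int (coord x 3))"

text \<open>Jump rates of the shape process H^3 = shape(X^3): rate from h to h' is the
  rate at which X^3 jumps from a state x with shape x = h into the fibre over h'
  (this does not depend on the choice of x, which makes H^3 Markov).\<close>
definition shape_Q :: "(nat \<Rightarrow> real) \<Rightarrow> int \<times> int \<Rightarrow> int \<times> int \<Rightarrow> real" where
  "shape_Q \<beta> h h' = (let x = (SOME x. shape x = h) in
      (\<Sum>j\<in>{1, 2, 3}. if shape (add_e x j) = h' then \<beta> (V x j) else 0))"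

end

theory Submission
  imports Defs
begin

(* The shape process moves from h by (1, 0), (-1, 1) or (0, -1), at rates beta_V that depend
   only on the signs of the coordinates of h. Foster's criterion for the embedded jump chain
   gives positive recurrence of a state x: a nonnegative U whose mean after one jump from any
   h \<noteq> x is smaller than U h by a fixed amount, and finite after a jump from x, bounds the
   expected number of jumps until the return to x; as every total rate is at least 3 beta_0,
   it also bounds the mean return time. The quadratic form p^2 + pq + q^2 has drift at most
   3 (beta_0 + beta_1 + beta_2) - min (beta_1 - beta_0) (beta_2 - beta_0) (|p| + |q|), which
   is negative far out exactly because beta_1, beta_2 > beta_0. Adding a multiple of 1 - rho^D,
   where D is a gauge of the distance to x that some move always decreases by one, makes the
   drift negative on the remaining bounded region as well, except at x itself. *)

section \<open>Sums of nonnegative extended reals\<close>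

lemma ennreal_summable_on [simp]: "(f :: 'a \<Rightarrow> ennreal) summable_on A"
  by (simp add: nonneg_summable_on_complete)

lemma infsum_cmult_right_ennreal:
  fixes f :: "'a \<Rightarrow> ennreal"
  shows "(\<Sum>\<^sub>\<infinity>x\<in>A. c * f x) = c * (\<Sum>\<^sub>\<infinity>x\<in>A. f x)"
proof -
  have "(\<Sum>\<^sub>\<infinity>x\<in>A. c * f x) = (SUP F\<in>{F. finite F \<and> F \<subseteq> A}. c * sum f F)"
    by (subst nonneg_infsum_complete) (simp_all add: sum_distrib_left)
  also have "\<dots> = c * (SUP F\<in>{F. finite F \<and> F \<subseteq> A}. sum f F)"
    by (simp add: SUP_mult_left_ennreal)
  also have "\<dots> = c * (\<Sum>\<^sub>\<infinity>x\<in>A. f x)"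
    by (subst nonneg_infsum_complete[of A f]) simp_all
  finally show ?thesis .
qed

lemma infsum_cmult_left_ennreal:
  fixes f :: "'a \<Rightarrow> ennreal"
  shows "(\<Sum>\<^sub>\<infinity>x\<in>A. f x * c) = (\<Sum>\<^sub>\<infinity>x\<in>A. f x) * c"
  using infsum_cmult_right_ennreal[of c f A] by (simp add: mult.commute)

lemma infsum_sum_ennreal:
  fixes f :: "'i \<Rightarrow> 'a \<Rightarrow> ennreal"
  assumes "finite I"
  shows "(\<Sum>\<^sub>\<infinity>x\<in>A. \<Sum>i\<in>I. f i x) = (\<Sum>i\<in>I. \<Sum>\<^sub>\<infinity>x\<in>A. f i x)"
  using assms by (induction I rule: finite_induct) (simp_all add: infsum_add)

lemma infsum_mono_set_ennreal:
  fixes f :: "'a \<Rightarrow> ennreal"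
  assumes "A \<subseteq> B"
  shows "infsum f A \<le> infsum f B"
  by (rule infsum_mono_neutral) (use assms in auto)

lemma infsum_Sigma_finite_ennreal:
  fixes f :: "'a \<times> 'b \<Rightarrow> ennreal"
  assumes "finite A"
  shows "infsum f (Sigma A B) = (\<Sum>x\<in>A. \<Sum>\<^sub>\<infinity>y\<in>B x. f (x, y))"
  using assms
proof (induction A rule: finite_induct)
  case (insert x A)
  have "Sigma (insert x A) B = Pair x ` B x \<union> Sigma A B" by auto
  moreover have "Pair x ` B x \<inter> Sigma A B = {}" using insert by auto
  moreover have "infsum f (Pair x ` B x) = (\<Sum>\<^sub>\<infinity>y\<in>B x. f (x, y))"
    by (subst infsum_reindex) (auto simp: inj_on_def o_def)
  ultimately show ?case using insert by (simp add: infsum_Un_disjoint)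
qed simp

lemma infsum_Sigma_ennreal:
  fixes f :: "'a \<times> 'b \<Rightarrow> ennreal"
  shows "infsum f (Sigma A B) = (\<Sum>\<^sub>\<infinity>x\<in>A. \<Sum>\<^sub>\<infinity>y\<in>B x. f (x, y))"
proof (rule antisym)
  show "infsum f (Sigma A B) \<le> (\<Sum>\<^sub>\<infinity>x\<in>A. \<Sum>\<^sub>\<infinity>y\<in>B x. f (x, y))"
  proof (subst nonneg_infsum_complete[of "Sigma A B"], simp, rule SUP_least, clarify)
    fix F assume F: "finite F" "F \<subseteq> Sigma A B"
    have "sum f F \<le> infsum f (Sigma (fst ` F) B)"
      using F infsum_mono_set_ennreal[of F "Sigma (fst ` F) B" f] by force
    also have "\<dots> = (\<Sum>x\<in>fst ` F. \<Sum>\<^sub>\<infinity>y\<in>B x. f (x, y))"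
      using F by (simp add: infsum_Sigma_finite_ennreal)
    also have "\<dots> \<le> (\<Sum>\<^sub>\<infinity>x\<in>A. \<Sum>\<^sub>\<infinity>y\<in>B x. f (x, y))"
      using F infsum_mono_set_ennreal[of "fst ` F" A] by fastforce
    finally show "sum f F \<le> (\<Sum>\<^sub>\<infinity>x\<in>A. \<Sum>\<^sub>\<infinity>y\<in>B x. f (x, y))" .
  qed
  show "(\<Sum>\<^sub>\<infinity>x\<in>A. \<Sum>\<^sub>\<infinity>y\<in>B x. f (x, y)) \<le> infsum f (Sigma A B)"
  proof (subst nonneg_infsum_complete[of A], simp, rule SUP_least, clarify)
    fix G assume G: "finite G" "G \<subseteq> A"
    then have "(\<Sum>x\<in>G. \<Sum>\<^sub>\<infinity>y\<in>B x. f (x, y)) = infsum f (Sigma G B)"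
      by (simp add: infsum_Sigma_finite_ennreal)
    also have "\<dots> \<le> infsum f (Sigma A B)"
      using G by (intro infsum_mono_set_ennreal) auto
    finally show "(\<Sum>x\<in>G. \<Sum>\<^sub>\<infinity>y\<in>B x. f (x, y)) \<le> infsum f (Sigma A B)" .
  qed
qed

lemma infsum_nat_ennreal_eq_SUP:
  fixes g :: "nat \<Rightarrow> ennreal"
  shows "(\<Sum>\<^sub>\<infinity>k. g k) = (SUP n. \<Sum>k<n. g k)"
proof (rule antisym)
  show "(\<Sum>\<^sub>\<infinity>k. g k) \<le> (SUP n. \<Sum>k<n. g k)"
  proof (subst nonneg_infsum_complete, simp, rule SUP_least, clarify)
    fix F :: "nat set" assume "finite F"
    then obtain n where "F \<subseteq> {..<n}"
      by (meson finite_nat_iff_bounded)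
    then have "sum g F \<le> (\<Sum>k<n. g k)"
      by (intro sum_mono2) auto
    also have "\<dots> \<le> (SUP n. \<Sum>k<n. g k)" by (rule SUP_upper) simp
    finally show "sum g F \<le> (SUP n. \<Sum>k<n. g k)" .
  qed
  show "(SUP n. \<Sum>k<n. g k) \<le> (\<Sum>\<^sub>\<infinity>k. g k)"
    using infsum_mono_set_ennreal[of "{..<n}" UNIV g for n] by (simp add: SUP_least)
qed

lemma ennreal_exists_less_if_mult_bounded:
  fixes a :: "nat \<Rightarrow> ennreal"
  assumes bound: "\<And>m. of_nat m * a m \<le> B" and "B < top" and "\<epsilon> > 0"
  shows "\<exists>m. a m < ennreal \<epsilon>"
proof -
  obtain b where b: "B = ennreal b" "b \<ge> 0"
    using \<open>B < top\<close> by (cases B) auto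
  obtain m :: nat where m: "b / \<epsilon> < real m"
    using reals_Archimedean2 by blast
  then have "m > 0" using b \<open>\<epsilon> > 0\<close> by (auto intro!: Nat.gr0I simp: field_simps)
  have "of_nat m * a m < top" using bound[of m] b by (simp add: le_less_trans)
  then obtain r where r: "a m = ennreal r" "r \<ge> 0"
    using \<open>m > 0\<close> by (cases "a m") (auto simp: ennreal_mult_less_top)
  have "ennreal (real m * r) \<le> ennreal b"
    using bound[of m] by (simp add: r b ennreal_mult ennreal_of_nat_eq_real_of_nat)
  then have "real m * r \<le> b" using b by simp
  moreover have "b < real m * \<epsilon>" using m \<open>\<epsilon> > 0\<close> by (simp add: field_simps)
  ultimately have "real m * r < real m * \<epsilon>" by linarith
  then have "r < \<epsilon>" by (simp add: mult_less_cancel_left)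
  then show ?thesis using r by (metis ennreal_lessI \<open>\<epsilon> > 0\<close>)
qed

lemma ennreal_le_divide_if_mult_le:
  fixes S K :: ennreal
  assumes "ennreal e * S \<le> K" and "e > 0"
  shows "S \<le> K / ennreal e"
proof -
  have "S = (S * ennreal e) / ennreal e"
    using \<open>e > 0\<close> by (simp add: mult_divide_eq_ennreal)
  also have "\<dots> \<le> K / ennreal e"
    using assms(1) by (intro divide_right_mono_ennreal) (simp add: mult.commute)
  finally show ?thesis .
qed

section \<open>Foster's criterion for the jump chain\<close>

lemma path_prob_snoc:
  "path_prob Q y (ys @ [z]) = path_prob Q y ys * jump_prob Q (last (y # ys)) z"
  by (induction ys arbitrary: y) (simp_all add: mult.assoc)

definition avoiding_paths :: "'a \<Rightarrow> nat \<Rightarrow> 'a list set" where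
  "avoiding_paths x k = {ys. length ys = k \<and> x \<notin> set ys}"

definition first_hitting_paths :: "'a \<Rightarrow> nat \<Rightarrow> 'a list set" where
  "first_hitting_paths x k = {ys. length ys = Suc k \<and> last ys = x \<and> x \<notin> set (butlast ys)}"

definition avoid_prob :: "('a \<Rightarrow> 'a \<Rightarrow> real) \<Rightarrow> 'a \<Rightarrow> 'a \<Rightarrow> nat \<Rightarrow> ennreal" where
  "avoid_prob Q x y k = infsum (path_prob Q y) (avoiding_paths x k)"

definition first_hit_prob :: "('a \<Rightarrow> 'a \<Rightarrow> real) \<Rightarrow> 'a \<Rightarrow> 'a \<Rightarrow> nat \<Rightarrow> ennreal" where
  "first_hit_prob Q x y k = infsum (path_prob Q y) (first_hitting_paths x k)"

lemma avoid_prob_0 [simp]: "avoid_prob Q x y 0 = 1"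
proof -
  have "avoiding_paths x 0 = {[]}" by (auto simp: avoiding_paths_def)
  then show ?thesis by (simp add: avoid_prob_def)
qed

lemma avoiding_paths_Suc:
  "avoiding_paths x (Suc k) = (\<lambda>(z, ys). z # ys) ` (Sigma (- {x}) (\<lambda>_. avoiding_paths x k))"
proof (rule set_eqI)
  fix ys
  show "ys \<in> avoiding_paths x (Suc k) \<longleftrightarrow> ys \<in> (\<lambda>(z, ys). z # ys) ` (Sigma (- {x}) (\<lambda>_. avoiding_paths x k))"
    by (cases ys) (auto simp: avoiding_paths_def image_iff)
qed

lemma avoid_prob_Suc:
  "avoid_prob Q x y (Suc k) = (\<Sum>\<^sub>\<infinity>z\<in>- {x}. jump_prob Q y z * avoid_prob Q x z k)"
proof -
  have inj: "inj_on (\<lambda>(z, ys). z # ys) (Sigma (- {x}) (\<lambda>_. avoiding_paths x k))"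
    by (auto simp: inj_on_def)
  have "avoid_prob Q x y (Suc k)
      = infsum (path_prob Q y \<circ> (\<lambda>(z, ys). z # ys)) (Sigma (- {x}) (\<lambda>_. avoiding_paths x k))"
    unfolding avoid_prob_def avoiding_paths_Suc by (rule infsum_reindex[OF inj])
  also have "\<dots> = (\<Sum>\<^sub>\<infinity>z\<in>- {x}. \<Sum>\<^sub>\<infinity>ys\<in>avoiding_paths x k. jump_prob Q y z * path_prob Q z ys)"
    by (simp add: infsum_Sigma_ennreal o_def)
  finally show ?thesis
    by (simp add: infsum_cmult_right_ennreal avoid_prob_def)
qed

lemma avoiding_paths_snoc:
  "(\<lambda>(ys, z). ys @ [z]) ` (avoiding_paths x k \<times> UNIV)
     = first_hitting_paths x k \<union> avoiding_paths x (Suc k)"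
proof (rule set_eqI)
  fix ws
  show "ws \<in> (\<lambda>(ys, z). ys @ [z]) ` (avoiding_paths x k \<times> UNIV)
     \<longleftrightarrow> ws \<in> first_hitting_paths x k \<union> avoiding_paths x (Suc k)"
  proof (cases ws rule: rev_cases)
    case (snoc ys z)
    then show ?thesis
      by (cases "z = x") (auto simp: avoiding_paths_def first_hitting_paths_def image_iff)
  qed (auto simp: avoiding_paths_def first_hitting_paths_def)
qed

lemma avoid_prob_split:
  assumes stoch: "\<And>w. (\<Sum>\<^sub>\<infinity>z. jump_prob Q w z) = 1"
  shows "avoid_prob Q x y k = first_hit_prob Q x y k + avoid_prob Q x y (Suc k)"
proof -
  have inj: "inj_on (\<lambda>(ys, z). ys @ [z]) (avoiding_paths x k \<times> UNIV)"
    by (auto simp: inj_on_def)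
  have disj: "first_hitting_paths x k \<inter> avoiding_paths x (Suc k) = {}"
    by (auto simp: avoiding_paths_def first_hitting_paths_def)
      (metis last_in_set length_0_conv nat.distinct(1))
  have "avoid_prob Q x y k
      = (\<Sum>\<^sub>\<infinity>ys\<in>avoiding_paths x k. \<Sum>\<^sub>\<infinity>z. path_prob Q y ys * jump_prob Q (last (y # ys)) z)"
    by (simp add: avoid_prob_def infsum_cmult_right_ennreal stoch)
  also have "\<dots> = (\<Sum>\<^sub>\<infinity>(ys, z)\<in>avoiding_paths x k \<times> UNIV. path_prob Q y (ys @ [z]))"
    by (simp add: infsum_Sigma_ennreal path_prob_snoc)
  also have "\<dots> = infsum (path_prob Q y) ((\<lambda>(ys, z). ys @ [z]) ` (avoiding_paths x k \<times> UNIV))"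
    by (subst infsum_reindex[OF inj]) (simp add: o_def case_prod_unfold)
  also have "\<dots> = first_hit_prob Q x y k + avoid_prob Q x y (Suc k)"
    by (simp add: avoiding_paths_snoc infsum_Un_disjoint[OF _ _ disj] first_hit_prob_def avoid_prob_def)
  finally show ?thesis .
qed

lemma first_hit_probs_add_avoid_prob:
  assumes stoch: "\<And>w. (\<Sum>\<^sub>\<infinity>z. jump_prob Q w z) = 1"
  shows "(\<Sum>k<m. first_hit_prob Q x y k) + avoid_prob Q x y m = 1"
proof (induction m)
  case (Suc m)
  then show ?case by (simp add: avoid_prob_split[OF stoch, of x y m] add.assoc)
qed simp

lemma weighted_first_hit_probs_add_avoid_prob:
  assumes stoch: "\<And>w. (\<Sum>\<^sub>\<infinity>z. jump_prob Q w z) = 1"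
  shows "(\<Sum>k<m. of_nat (Suc k) * first_hit_prob Q x y k) + of_nat m * avoid_prob Q x y m
       = (\<Sum>k<m. avoid_prob Q x y k)"
proof (induction m)
  case (Suc m)
  have split: "avoid_prob Q x y m = first_hit_prob Q x y m + avoid_prob Q x y (Suc m)"
    by (rule avoid_prob_split[OF stoch])
  have "(\<Sum>k<Suc m. of_nat (Suc k) * first_hit_prob Q x y k) + of_nat (Suc m) * avoid_prob Q x y (Suc m)
     = (\<Sum>k<m. of_nat (Suc k) * first_hit_prob Q x y k) + of_nat (Suc m) * avoid_prob Q x y m"
    by (simp only: split sum.lessThan_Suc distrib_left add.assoc)
  also have "\<dots> = (\<Sum>k<Suc m. avoid_prob Q x y k)"
    by (simp add: Suc.IH[symmetric] distrib_right add_ac)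
  finally show ?case .
qed simp

text \<open>Foster's argument: along the chain killed at x, U decreases in mean by at least e per
  jump, so e times the expected number of jumps before reaching x is at most U.\<close>

lemma drift_bounds_avoid_probs:
  fixes U :: "'a \<Rightarrow> ennreal"
  assumes drift: "\<And>y. y \<noteq> x \<Longrightarrow> e + (\<Sum>\<^sub>\<infinity>z. jump_prob Q y z * U z) \<le> U y"
  shows "y \<noteq> x \<Longrightarrow> e * (\<Sum>k<n. avoid_prob Q x y k) \<le> U y"
proof (induction n arbitrary: y)
  case (Suc n)
  have "e * (\<Sum>k<Suc n. avoid_prob Q x y k)
      = e + (\<Sum>\<^sub>\<infinity>z\<in>- {x}. jump_prob Q y z * (e * (\<Sum>k<n. avoid_prob Q x z k)))"
    unfolding sum.lessThan_Suc_shift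
    by (simp add: avoid_prob_Suc infsum_sum_ennreal sum_distrib_left distrib_left
        infsum_cmult_right_ennreal[symmetric] mult.left_commute)
  also have "\<dots> \<le> e + (\<Sum>\<^sub>\<infinity>z\<in>- {x}. jump_prob Q y z * U z)"
    by (intro add_left_mono infsum_mono mult_left_mono Suc.IH) auto
  also have "\<dots> \<le> e + (\<Sum>\<^sub>\<infinity>z. jump_prob Q y z * U z)"
    by (intro add_left_mono infsum_mono_set_ennreal) auto
  also have "\<dots> \<le> U y" by (rule drift[OF Suc.prems])
  finally show ?case .
qed simp

lemma drift_bounds_avoid_probs_Suc:
  fixes U :: "'a \<Rightarrow> ennreal"
  assumes drift: "\<And>y. y \<noteq> x \<Longrightarrow> e + (\<Sum>\<^sub>\<infinity>z. jump_prob Q y z * U z) \<le> U y"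
  shows "e * (\<Sum>k<n. avoid_prob Q x y (Suc k)) \<le> (\<Sum>\<^sub>\<infinity>z. jump_prob Q y z * U z)"
proof -
  have "e * (\<Sum>k<n. avoid_prob Q x y (Suc k))
      = (\<Sum>\<^sub>\<infinity>z\<in>- {x}. jump_prob Q y z * (e * (\<Sum>k<n. avoid_prob Q x z k)))"
    by (simp add: avoid_prob_Suc infsum_sum_ennreal sum_distrib_left
        infsum_cmult_right_ennreal[symmetric] mult.left_commute)
  also have "\<dots> \<le> (\<Sum>\<^sub>\<infinity>z\<in>- {x}. jump_prob Q y z * U z)"
    by (intro infsum_mono mult_left_mono drift_bounds_avoid_probs[OF drift]) auto
  also have "\<dots> \<le> (\<Sum>\<^sub>\<infinity>z. jump_prob Q y z * U z)"
    by (intro infsum_mono_set_ennreal) auto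
  finally show ?thesis .
qed

lemma return_paths_eq_snd_image: "return_paths x = snd ` (SIGMA k:UNIV. first_hitting_paths x k)"
proof (rule set_eqI)
  fix ys
  show "ys \<in> return_paths x \<longleftrightarrow> ys \<in> snd ` (SIGMA k:UNIV. first_hitting_paths x k)"
  proof
    assume "ys \<in> return_paths x"
    then have "(length ys - 1, ys) \<in> (SIGMA k:UNIV. first_hitting_paths x k)"
      by (auto simp: return_paths_def first_hitting_paths_def)
    then show "ys \<in> snd ` (SIGMA k:UNIV. first_hitting_paths x k)" by force
  qed (auto simp: return_paths_def first_hitting_paths_def)
qed

lemma infsum_return_paths:
  fixes g :: "'a list \<Rightarrow> ennreal"
  shows "infsum g (return_paths x) = (SUP m. \<Sum>k<m. infsum g (first_hitting_paths x k))"
proof -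
  have inj: "inj_on snd (SIGMA k:UNIV. first_hitting_paths x k)"
    by (auto simp: inj_on_def first_hitting_paths_def)
  have "infsum g (return_paths x) = infsum (g \<circ> snd) (SIGMA k:UNIV. first_hitting_paths x k)"
    unfolding return_paths_eq_snd_image by (rule infsum_reindex[OF inj])
  then show ?thesis
    by (simp add: infsum_Sigma_ennreal o_def infsum_nat_ennreal_eq_SUP)
qed


lemma avoid_probs_bounded_by_drift:
  fixes U :: "'a \<Rightarrow> ennreal"
  assumes drift: "\<And>y. y \<noteq> x \<Longrightarrow> ennreal e + (\<Sum>\<^sub>\<infinity>z. jump_prob Q y z * U z) \<le> U y"
    and "e > 0"
  shows "(\<Sum>k<n. avoid_prob Q x x k) \<le> 1 + (\<Sum>\<^sub>\<infinity>z. jump_prob Q x z * U z) / ennreal e"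
proof (cases n)
  case (Suc m)
  have "(\<Sum>k<m. avoid_prob Q x x (Suc k)) \<le> (\<Sum>\<^sub>\<infinity>z. jump_prob Q x z * U z) / ennreal e"
    using drift_bounds_avoid_probs_Suc[OF drift] \<open>e > 0\<close> by (rule ennreal_le_divide_if_mult_le)
  then show ?thesis
    unfolding Suc sum.lessThan_Suc_shift by (simp add: add_left_mono)
qed simp

lemma weighted_first_hit_probs_le_and_avoid_prob_le:
  assumes stoch: "\<And>w. (\<Sum>\<^sub>\<infinity>z. jump_prob Q w z) = 1"
    and bound: "\<And>n. (\<Sum>k<n. avoid_prob Q x x k) \<le> B"
  shows "(\<Sum>k<m. of_nat (Suc k) * first_hit_prob Q x x k) \<le> B"
    and "of_nat m * avoid_prob Q x x m \<le> B"
proof -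
  have "(\<Sum>k<m. of_nat (Suc k) * first_hit_prob Q x x k)
      \<le> (\<Sum>k<m. of_nat (Suc k) * first_hit_prob Q x x k) + of_nat m * avoid_prob Q x x m"
    "of_nat m * avoid_prob Q x x m
      \<le> (\<Sum>k<m. of_nat (Suc k) * first_hit_prob Q x x k) + of_nat m * avoid_prob Q x x m"
    by simp_all
  note le_sum = this[unfolded weighted_first_hit_probs_add_avoid_prob[OF stoch]]
  show "(\<Sum>k<m. of_nat (Suc k) * first_hit_prob Q x x k) \<le> B"
    using le_sum(1) bound[of m] by (rule order_trans)
  show "of_nat m * avoid_prob Q x x m \<le> B"
    using le_sum(2) bound[of m] by (rule order_trans)
qed

lemma return_prob_eq_1_if_avoid_probs_bounded:
  assumes stoch: "\<And>w. (\<Sum>\<^sub>\<infinity>z. jump_prob Q w z) = 1"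
    and bound: "\<And>n. (\<Sum>k<n. avoid_prob Q x x k) \<le> B" and "B < top"
  shows "return_prob Q x = 1"
proof (rule antisym)
  have return_prob_SUP: "return_prob Q x = (SUP m. \<Sum>k<m. first_hit_prob Q x x k)"
    unfolding return_prob_def first_hit_prob_def by (rule infsum_return_paths)
  show "return_prob Q x \<le> 1"
    unfolding return_prob_SUP
  proof (rule SUP_least)
    fix m
    have "(\<Sum>k<m. first_hit_prob Q x x k) \<le> (\<Sum>k<m. first_hit_prob Q x x k) + avoid_prob Q x x m"
      by simp
    also have "\<dots> = 1" by (rule first_hit_probs_add_avoid_prob[OF stoch])
    finally show "(\<Sum>k<m. first_hit_prob Q x x k) \<le> 1" .
  qed
  show "1 \<le> return_prob Q x"
  proof (rule ennreal_le_epsilon)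
    fix \<epsilon> :: real assume "\<epsilon> > 0"
    have "of_nat m * avoid_prob Q x x m \<le> B" for m
      by (rule weighted_first_hit_probs_le_and_avoid_prob_le(2)[OF stoch bound])
    then obtain m where m: "avoid_prob Q x x m < ennreal \<epsilon>"
      using ennreal_exists_less_if_mult_bounded \<open>B < top\<close> \<open>\<epsilon> > 0\<close> by blast
    have "1 = (\<Sum>k<m. first_hit_prob Q x x k) + avoid_prob Q x x m"
      by (rule first_hit_probs_add_avoid_prob[OF stoch, symmetric])
    also have "\<dots> \<le> return_prob Q x + ennreal \<epsilon>"
      unfolding return_prob_SUP by (intro add_mono SUP_upper) (use m in auto)
    finally show "1 \<le> return_prob Q x + ennreal \<epsilon>" .
  qed
qed

lemma expected_return_jumps_le_if_avoid_probs_bounded: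
  assumes stoch: "\<And>w. (\<Sum>\<^sub>\<infinity>z. jump_prob Q w z) = 1"
    and bound: "\<And>n. (\<Sum>k<n. avoid_prob Q x x k) \<le> B"
  shows "(\<Sum>\<^sub>\<infinity>ys\<in>return_paths x. path_prob Q x ys * of_nat (length ys)) \<le> B"
proof -
  have first_hit_moment: "(\<Sum>\<^sub>\<infinity>ys\<in>first_hitting_paths x k. path_prob Q x ys * of_nat (length ys))
      = of_nat (Suc k) * first_hit_prob Q x x k" for k
  proof -
    have "(\<Sum>\<^sub>\<infinity>ys\<in>first_hitting_paths x k. path_prob Q x ys * of_nat (length ys))
        = (\<Sum>\<^sub>\<infinity>ys\<in>first_hitting_paths x k. path_prob Q x ys * of_nat (Suc k))"
      by (rule infsum_cong) (simp add: first_hitting_paths_def)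
    then show ?thesis
      by (simp add: infsum_cmult_left_ennreal first_hit_prob_def mult.commute)
  qed
  show ?thesis
    unfolding infsum_return_paths first_hit_moment
    by (rule SUP_least) (rule weighted_first_hit_probs_le_and_avoid_prob_le(1)[OF stoch bound])
qed

lemma mean_return_time_le_expected_return_jumps:
  assumes "c > 0" and rate_bound: "\<And>z. ennreal c \<le> total_rate Q z"
  shows "mean_return_time Q x
    \<le> (\<Sum>\<^sub>\<infinity>ys\<in>return_paths x. path_prob Q x ys * of_nat (length ys)) * ennreal (1 / c)"
proof -
  have holding_bound: "1 / total_rate Q z \<le> ennreal (1 / c)" for z
  proof (cases "total_rate Q z" rule: ennreal_cases)
    case (real t)
    then have "c \<le> t" using rate_bound[of z] by simp
    then have "1 / t \<le> 1 / c" using \<open>c > 0\<close> by (simp add: frac_le)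
    moreover have "1 / total_rate Q z = ennreal (1 / t)"
      using real divide_ennreal[of 1 t] \<open>c \<le> t\<close> \<open>c > 0\<close> by simp
    ultimately show ?thesis by (simp add: ennreal_leI)
  qed simp
  have "holding_time_sum Q x ys \<le> of_nat (length ys) * ennreal (1 / c)" if "ys \<noteq> []" for ys
  proof -
    have "holding_time_sum Q x ys \<le> (\<Sum>z\<leftarrow>x # butlast ys. ennreal (1 / c))"
      unfolding holding_time_sum_def by (intro sum_list_mono holding_bound)
    also have "\<dots> = of_nat (length (x # butlast ys)) * ennreal (1 / c)"
      by (rule sum_list_triv)
    also have "length (x # butlast ys) = length ys"
      using that by simp
    finally show ?thesis .
  qed
  then have "mean_return_time Q x
      \<le> (\<Sum>\<^sub>\<infinity>ys\<in>return_paths x. path_prob Q x ys * of_nat (length ys) * ennreal (1 / c))"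
    unfolding mean_return_time_def
    by (intro infsum_mono) (auto simp: return_paths_def mult.assoc intro: mult_left_mono)
  then show ?thesis
    by (simp add: infsum_cmult_left_ennreal)
qed

theorem positive_recurrent_state_if_drift:
  fixes U :: "'a \<Rightarrow> ennreal"
  assumes stoch: "\<And>w. (\<Sum>\<^sub>\<infinity>z. jump_prob Q w z) = 1"
    and drift: "\<And>y. y \<noteq> x \<Longrightarrow> ennreal e + (\<Sum>\<^sub>\<infinity>z. jump_prob Q y z * U z) \<le> U y"
    and "e > 0"
    and finite_at_x: "(\<Sum>\<^sub>\<infinity>z. jump_prob Q x z * U z) < top"
    and "c > 0" and rate_bound: "\<And>z. ennreal c \<le> total_rate Q z"
  shows "positive_recurrent_state Q x"
proof -
  define B where "B = 1 + (\<Sum>\<^sub>\<infinity>z. jump_prob Q x z * U z) / ennreal e"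
  have bound: "(\<Sum>k<n. avoid_prob Q x x k) \<le> B" for n
    unfolding B_def by (rule avoid_probs_bounded_by_drift[OF drift \<open>e > 0\<close>])
  have "(\<Sum>\<^sub>\<infinity>z. jump_prob Q x z * U z) / ennreal e \<noteq> top"
    using less_imp_neq[OF finite_at_x] \<open>e > 0\<close> by (simp add: ennreal_divide_eq_top_iff)
  then have "B \<noteq> top"
    by (simp add: B_def ennreal_add_eq_top)
  then have "B < top"
    using top.not_eq_extremum by blast
  have "mean_return_time Q x
      \<le> (\<Sum>\<^sub>\<infinity>ys\<in>return_paths x. path_prob Q x ys * of_nat (length ys)) * ennreal (1 / c)"
    by (rule mean_return_time_le_expected_return_jumps[OF \<open>c > 0\<close> rate_bound])
  also have "\<dots> \<le> B * ennreal (1 / c)"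
    by (intro mult_right_mono expected_return_jumps_le_if_avoid_probs_bounded[OF stoch bound]) simp
  also have "\<dots> < top"
    using \<open>B < top\<close> by (simp add: ennreal_mult_less_top)
  finally have "mean_return_time Q x < \<infinity>" by simp
  with return_prob_eq_1_if_avoid_probs_bounded[OF stoch bound \<open>B < top\<close>] show ?thesis
    unfolding positive_recurrent_state_def by blast
qed

section \<open>The shape process\<close>

definition shape_move :: "int \<times> int \<Rightarrow> nat \<Rightarrow> int \<times> int" where
  "shape_move h j = (if j = 1 then (fst h + 1, snd h)
     else if j = 2 then (fst h - 1, snd h + 1) else (fst h, snd h - 1))"

definition shape_V :: "int \<times> int \<Rightarrow> nat \<Rightarrow> nat" where
  "shape_V h j = (if j = 1 then of_bool (fst h < 0)
     else if j = 2 then of_bool (fst h > 0) + of_bool (snd h < 0)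
     else of_bool (snd h > 0))"

definition shape_total_rate :: "(nat \<Rightarrow> real) \<Rightarrow> int \<times> int \<Rightarrow> real" where
  "shape_total_rate \<beta> h = \<beta> (shape_V h 1) + \<beta> (shape_V h 2) + \<beta> (shape_V h 3)"

lemma shape_surj: "\<exists>x. shape x = h"
proof -
  obtain p q where h: "h = (p, q)" by (cases h)
  define n where "n = \<bar>p\<bar> + \<bar>q\<bar>"
  have "shape (nat (n + q + p), nat (n + q), nat n) = h"
    unfolding h shape_def coord_def n_def by auto
  then show ?thesis by blast
qed

lemma shape_add_e: "j \<in> {1, 2, 3} \<Longrightarrow> shape (add_e x j) = shape_move (shape x) j"
  by (cases x) (auto simp: shape_def add_e_def coord_def shape_move_def)

lemma V_eq_shape_V: "j \<in> {1, 2, 3} \<Longrightarrow> V x j = shape_V (shape x) j"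
  by (cases x) (auto simp: V_def shape_V_def shape_def coord_def)

lemma shape_V_le_2: "shape_V h j \<le> 2"
  by (auto simp: shape_V_def)

lemma shape_Q_eq:
  "shape_Q \<beta> h h' = (\<Sum>j\<in>{1, 2, 3}. if h' = shape_move h j then \<beta> (shape_V h j) else 0)"
proof -
  define x where "x = (SOME x. shape x = h)"
  have "shape x = h" unfolding x_def using shape_surj by (rule someI_ex)
  then show ?thesis
    unfolding shape_Q_def x_def[symmetric] Let_def
    by (intro sum.cong) (auto simp: shape_add_e V_eq_shape_V)
qed

lemma shape_move_distinct:
  "shape_move h 1 \<noteq> shape_move h 2" "shape_move h 1 \<noteq> shape_move h 3"
  "shape_move h 2 \<noteq> shape_move h 3"
  "shape_move h 1 \<noteq> h" "shape_move h 2 \<noteq> h" "shape_move h 3 \<noteq> h"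
  by (auto simp: shape_move_def prod_eq_iff)

lemma shape_Q_shape_move:
  "shape_Q \<beta> h (shape_move h 1) = \<beta> (shape_V h 1)"
  "shape_Q \<beta> h (shape_move h 2) = \<beta> (shape_V h 2)"
  "shape_Q \<beta> h (shape_move h 3) = \<beta> (shape_V h 3)"
  using shape_move_distinct[of h] by (simp_all add: shape_Q_eq)

lemma shape_Q_eq_0:
  "z \<notin> {shape_move h 1, shape_move h 2, shape_move h 3} \<Longrightarrow> shape_Q \<beta> h z = 0"
  by (auto simp: shape_Q_eq)

lemma infsum_supported_on_shape_moves:
  fixes g :: "int \<times> int \<Rightarrow> ennreal"
  assumes "\<And>z. z \<notin> {shape_move h 1, shape_move h 2, shape_move h 3} \<Longrightarrow> g z = 0"
    and "{shape_move h 1, shape_move h 2, shape_move h 3} \<subseteq> A"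
  shows "infsum g A = g (shape_move h 1) + g (shape_move h 2) + g (shape_move h 3)"
proof -
  have "infsum g A = infsum g {shape_move h 1, shape_move h 2, shape_move h 3}"
    by (rule infsum_cong_neutral) (use assms in auto)
  also have "\<dots> = g (shape_move h 1) + g (shape_move h 2) + g (shape_move h 3)"
    using shape_move_distinct[of h] by (simp add: add.assoc)
  finally show ?thesis .
qed

lemma rtrancl_int_line:
  fixes f :: "int \<Rightarrow> 'a"
  assumes up: "\<And>i. (f i, f (i + 1)) \<in> R\<^sup>*" and down: "\<And>i. (f i, f (i - 1)) \<in> R\<^sup>*"
  shows "(f i, f j) \<in> R\<^sup>*"
proof (induction j rule: int_induct[where k = i])
  case (step1 j)
  show ?case using step1(2) up[of j] by (rule rtrancl_trans)
next
  case (step2 j)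
  show ?case using step2(2) down[of j] by (rule rtrancl_trans)
qed simp

locale crystal_rates =
  fixes \<beta> :: "nat \<Rightarrow> real"
  assumes \<beta>0_pos: "\<beta> 0 > 0" and \<beta>1_gt: "\<beta> 1 > \<beta> 0" and \<beta>2_gt: "\<beta> 2 > \<beta> 0"
begin

definition rate_sum :: real where
  "rate_sum = \<beta> 0 + \<beta> 1 + \<beta> 2"

lemma rate_sum_pos: "rate_sum > 0"
  using \<beta>0_pos \<beta>1_gt \<beta>2_gt by (simp add: rate_sum_def)

lemma shape_rate_bounds: "\<beta> 0 \<le> \<beta> (shape_V h j)" "\<beta> (shape_V h j) \<le> rate_sum"
proof -
  have "shape_V h j \<in> {0, 1, 2}" using shape_V_le_2[of h j] by auto
  then show "\<beta> 0 \<le> \<beta> (shape_V h j)" "\<beta> (shape_V h j) \<le> rate_sum"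
    using \<beta>0_pos \<beta>1_gt \<beta>2_gt by (auto simp: rate_sum_def)
qed

lemma shape_rate_pos: "\<beta> (shape_V h j) > 0"
  using shape_rate_bounds(1)[of h j] \<beta>0_pos by linarith

lemma shape_total_rate_bounds: "3 * \<beta> 0 \<le> shape_total_rate \<beta> h" "shape_total_rate \<beta> h \<le> 3 * rate_sum"
  using shape_rate_bounds[of h 1] shape_rate_bounds[of h 2] shape_rate_bounds[of h 3]
  by (simp_all add: shape_total_rate_def)

lemma shape_total_rate_pos: "shape_total_rate \<beta> h > 0"
  using shape_total_rate_bounds(1)[of h] \<beta>0_pos by linarith

lemma shape_Q_nonneg: "shape_Q \<beta> h z \<ge> 0"
  unfolding shape_Q_eq by (rule sum_nonneg) (simp add: less_imp_le[OF shape_rate_pos])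

lemma total_rate_shape_Q: "total_rate (shape_Q \<beta>) h = ennreal (shape_total_rate \<beta> h)"
proof -
  have "total_rate (shape_Q \<beta>) h = ennreal (shape_Q \<beta> h (shape_move h 1))
      + ennreal (shape_Q \<beta> h (shape_move h 2)) + ennreal (shape_Q \<beta> h (shape_move h 3))"
    unfolding total_rate_def
    by (rule infsum_supported_on_shape_moves) (use shape_move_distinct[of h] in \<open>auto simp: shape_Q_eq_0\<close>)
  then show ?thesis
    using shape_rate_pos[of h]
    by (simp add: shape_Q_shape_move[simplified] shape_total_rate_def ennreal_plus[symmetric]
        less_imp_le del: ennreal_plus)
qed

lemma jump_prob_shape_Q:
  "jump_prob (shape_Q \<beta>) h z = ennreal (shape_Q \<beta> h z / shape_total_rate \<beta> h)"
proof (cases "z = h")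
  case True
  then have "shape_Q \<beta> h z = 0"
    using shape_move_distinct[of h] by (intro shape_Q_eq_0) auto
  then show ?thesis using True by (simp add: jump_prob_def)
next
  case False
  then show ?thesis
    using shape_total_rate_pos[of h] shape_Q_nonneg[of h z]
    by (simp add: jump_prob_def total_rate_shape_Q divide_ennreal)
qed

lemma infsum_jump_prob_shape_Q:
  fixes U :: "int \<times> int \<Rightarrow> real"
  assumes "\<And>z. U z \<ge> 0"
  shows "(\<Sum>\<^sub>\<infinity>z. jump_prob (shape_Q \<beta>) h z * ennreal (U z))
    = ennreal ((\<beta> (shape_V h 1) * U (shape_move h 1) + \<beta> (shape_V h 2) * U (shape_move h 2)
        + \<beta> (shape_V h 3) * U (shape_move h 3)) / shape_total_rate \<beta> h)"
proof -
  have "(\<Sum>\<^sub>\<infinity>z. jump_prob (shape_Q \<beta>) h z * ennreal (U z))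
     = jump_prob (shape_Q \<beta>) h (shape_move h 1) * ennreal (U (shape_move h 1))
     + jump_prob (shape_Q \<beta>) h (shape_move h 2) * ennreal (U (shape_move h 2))
     + jump_prob (shape_Q \<beta>) h (shape_move h 3) * ennreal (U (shape_move h 3))"
    by (rule infsum_supported_on_shape_moves)
      (auto simp: jump_prob_shape_Q shape_Q_eq_0 simp del: ennreal_eq_0_iff)
  then show ?thesis
    using shape_total_rate_pos[of h] shape_rate_pos[of h] assms
    by (simp add: jump_prob_shape_Q shape_Q_shape_move[simplified] ennreal_mult[symmetric]
        ennreal_plus[symmetric] add_divide_distrib less_imp_le del: ennreal_plus)
qed

lemma jump_prob_shape_Q_stochastic: "(\<Sum>\<^sub>\<infinity>z. jump_prob (shape_Q \<beta>) h z) = 1"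
  using infsum_jump_prob_shape_Q[of "\<lambda>_. 1" h] shape_total_rate_pos[of h]
  by (simp add: shape_total_rate_def)

abbreviation shape_edges :: "((int \<times> int) \<times> int \<times> int) set" where
  "shape_edges \<equiv> {(a, b). a \<noteq> b \<and> shape_Q \<beta> a b > 0}"

lemma shape_move_in_shape_edges: "j \<in> {1, 2, 3} \<Longrightarrow> (h, shape_move h j) \<in> shape_edges"
  using shape_move_distinct[of h] shape_Q_shape_move[of \<beta> h] shape_rate_pos[of h] by auto

lemma shape_edges_two_steps:
  "j \<in> {1, 2, 3} \<Longrightarrow> k \<in> {1, 2, 3} \<Longrightarrow> (h, shape_move (shape_move h j) k) \<in> shape_edges\<^sup>*"
  using shape_move_in_shape_edges[of j h] shape_move_in_shape_edges[of k "shape_move h j"]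
  by (blast intro: r_into_rtrancl rtrancl_into_rtrancl)

text \<open>The moves are (1, 0), (-1, 1) and (0, -1), so (-1, 0) and (0, 1) take two of them.\<close>

lemma shape_edges_unit_steps:
  "((p, q), (p + 1, q)) \<in> shape_edges\<^sup>*" "((p, q), (p - 1, q)) \<in> shape_edges\<^sup>*"
  "((p, q), (p, q + 1)) \<in> shape_edges\<^sup>*" "((p, q), (p, q - 1)) \<in> shape_edges\<^sup>*"
  using r_into_rtrancl[OF shape_move_in_shape_edges[of 1 "(p, q)"]]
    r_into_rtrancl[OF shape_move_in_shape_edges[of 3 "(p, q)"]]
    shape_edges_two_steps[of 2 3 "(p, q)"] shape_edges_two_steps[of 1 2 "(p, q)"]
  by (simp_all add: shape_move_def)

lemma shape_Q_irreducible: "ctmc_irreducible (shape_Q \<beta>)"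
  unfolding ctmc_irreducible_def
proof (intro allI)
  fix a b :: "int \<times> int"
  have "((fst a, snd a), (fst b, snd a)) \<in> shape_edges\<^sup>*"
    using shape_edges_unit_steps(1,2) by (rule rtrancl_int_line[where f = "\<lambda>i. (i, snd a)"])
  moreover have "((fst b, snd a), (fst b, snd b)) \<in> shape_edges\<^sup>*"
    using shape_edges_unit_steps(3,4) by (rule rtrancl_int_line[where f = "\<lambda>i. (fst b, i)"])
  ultimately show "(a, b) \<in> shape_edges\<^sup>*" by simp
qed

end

section \<open>A Lyapunov function\<close>

definition shape_generator :: "(nat \<Rightarrow> real) \<Rightarrow> (int \<times> int \<Rightarrow> real) \<Rightarrow> int \<times> int \<Rightarrow> real" where
  "shape_generator \<beta> U h = \<beta> (shape_V h 1) * (U (shape_move h 1) - U h)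
     + \<beta> (shape_V h 2) * (U (shape_move h 2) - U h) + \<beta> (shape_V h 3) * (U (shape_move h 3) - U h)"

definition quad_form :: "int \<times> int \<Rightarrow> real" where
  "quad_form h = of_int (fst h) ^ 2 + of_int (fst h) * of_int (snd h) + of_int (snd h) ^ 2"

lemma quad_form_nonneg: "quad_form h \<ge> 0"
proof -
  have "quad_form h = (of_int (fst h) + of_int (snd h) / 2) ^ 2 + 3 / 4 * of_int (snd h) ^ 2"
    by (simp add: quad_form_def power2_eq_square algebra_simps)
  then show ?thesis by simp
qed

lemma shape_generator_quad_form:
  fixes p q :: int
  defines "a \<equiv> real_of_int p" and "b \<equiv> real_of_int q"
  shows "shape_generator \<beta> quad_form (p, q) = shape_total_rate \<beta> (p, q)
    + (\<beta> (shape_V (p, q) 1) * (2 * a + b) + \<beta> (shape_V (p, q) 2) * (b - a)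
       + \<beta> (shape_V (p, q) 3) * (- a - 2 * b))"
  by (simp add: shape_generator_def shape_total_rate_def quad_form_def shape_move_def a_def b_def
      power2_eq_square algebra_simps)

definition target_gauge :: "int \<times> int \<Rightarrow> int \<times> int \<Rightarrow> int" where
  "target_gauge x h = 3 * max 0 (max (fst h - fst x) (snd x - snd h))
     + (fst x - fst h) - (snd x - snd h)"

lemma target_gauge_nonneg: "target_gauge x h \<ge> 0"
  unfolding target_gauge_def by (auto simp: max_def)

lemma target_gauge_eq_0: "target_gauge x h = 0 \<Longrightarrow> h = x"
  unfolding target_gauge_def by (cases x, cases h) (auto simp: max_def split: if_splits)

lemma target_gauge_decreasing_move:
  "h \<noteq> x \<Longrightarrow> \<exists>j\<in>{1, 2, 3}. target_gauge x (shape_move h j) = target_gauge x h - 1"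
  unfolding target_gauge_def shape_move_def by (cases x, cases h) (auto simp: max_def split: if_splits)

lemma target_gauge_le: "target_gauge x h \<le> 4 * (\<bar>fst x\<bar> + \<bar>snd x\<bar> + \<bar>fst h\<bar> + \<bar>snd h\<bar>)"
  unfolding target_gauge_def by (auto simp: max_def abs_if split: if_splits)

context crystal_rates
begin

definition drift_gap :: real where
  "drift_gap = min (\<beta> 1 - \<beta> 0) (\<beta> 2 - \<beta> 0)"

lemma drift_gap_pos: "drift_gap > 0"
  using \<beta>1_gt \<beta>2_gt by (simp add: drift_gap_def)

lemma linear_drift_le:
  fixes p q :: int
  defines "a \<equiv> real_of_int p" and "b \<equiv> real_of_int q"
  shows "\<beta> (shape_V (p, q) 1) * (2 * a + b) + \<beta> (shape_V (p, q) 2) * (b - a)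
      + \<beta> (shape_V (p, q) 3) * (- a - 2 * b) \<le> - drift_gap * (\<bar>a\<bar> + \<bar>b\<bar>)"
proof -
  have gap: "drift_gap \<le> \<beta> 1 - \<beta> 0" "drift_gap \<le> \<beta> 2 - \<beta> 0" "drift_gap \<ge> 0"
    using drift_gap_pos by (auto simp: drift_gap_def)
  have scale: "drift_gap * (\<bar>a\<bar> + \<bar>b\<bar>) \<le> d * L"
    if "drift_gap \<le> d" "\<bar>a\<bar> + \<bar>b\<bar> \<le> L" for d L
    using that gap(3) by (intro mult_mono) auto
  note defs = a_def b_def shape_V_def
  consider "p > 0" "q > 0" | "p > 0" "q = 0" | "p > 0" "q < 0"
    | "p = 0" "q > 0" | "p = 0" "q = 0" | "p = 0" "q < 0"
    | "p < 0" "q > 0" | "p < 0" "q = 0" | "p < 0" "q < 0"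
    by fastforce
  then show ?thesis
  proof cases
    case 1
    with scale[OF gap(1), of "2 * a + b"] show ?thesis by (simp add: defs algebra_simps)
  next
    case 2
    with scale[OF gap(1), of "a - b"] show ?thesis by (simp add: defs algebra_simps)
  next
    case 3
    with scale[OF gap(2), of "a - b"] show ?thesis by (simp add: defs algebra_simps numeral_2_eq_2)
  next
    case 4
    with scale[OF gap(1), of "a + 2 * b"] show ?thesis by (simp add: defs algebra_simps)
  next
    case 5
    then show ?thesis by (simp add: defs)
  next
    case 6
    with scale[OF gap(1), of "a - b"] show ?thesis by (simp add: defs algebra_simps)
  next
    case 7
    with scale[OF gap(1), of "b - a"] show ?thesis by (simp add: defs algebra_simps)
  next
    case 8
    with scale[OF gap(1), of "- 2 * a - b"] show ?thesis by (simp add: defs algebra_simps)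
  next
    case 9
    with scale[OF gap(1), of "- a - 2 * b"] show ?thesis by (simp add: defs algebra_simps)
  qed
qed

lemma shape_generator_quad_form_le:
  "shape_generator \<beta> quad_form h \<le> 3 * rate_sum - drift_gap * (\<bar>of_int (fst h)\<bar> + \<bar>of_int (snd h)\<bar>)"
proof -
  obtain p q where h: "h = (p, q)" by (cases h)
  show ?thesis
    using shape_generator_quad_form[of \<beta> p q] linear_drift_le[of p q] shape_total_rate_bounds(2)[of h]
    by (simp add: h)
qed

text \<open>Small enough that the move decreasing the gauge outweighs the other two.\<close>

definition \<rho> :: real where
  "\<rho> = \<beta> 0 / (8 * rate_sum)"

lemma \<rho>_pos: "\<rho> > 0"
  using \<beta>0_pos rate_sum_pos by (simp add: \<rho>_def)

lemma \<rho>_le: "\<rho> \<le> 1 / 8"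
  using \<beta>0_pos \<beta>1_gt \<beta>2_gt rate_sum_pos by (simp add: \<rho>_def rate_sum_def field_simps)

lemma gauge_power_increment_ge:
  "- rate_sum * \<rho> ^ d \<le> \<beta> (shape_V h j) * (\<rho> ^ n - \<rho> ^ d)"
proof -
  have "\<beta> (shape_V h j) * (- (\<rho> ^ d)) \<le> \<beta> (shape_V h j) * (\<rho> ^ n - \<rho> ^ d)"
    using shape_rate_pos[of h j] \<rho>_pos by (intro mult_left_mono) auto
  moreover have "rate_sum * (- (\<rho> ^ d)) \<le> \<beta> (shape_V h j) * (- (\<rho> ^ d))"
    using shape_rate_bounds(2)[of h j] \<rho>_pos by (intro mult_right_mono_neg) auto
  ultimately show ?thesis by simp
qed

lemma gauge_power_decrement_ge:
  "\<beta> 0 * (1 - \<rho>) * \<rho> ^ d \<le> \<beta> (shape_V h j) * (\<rho> ^ d - \<rho> ^ Suc d)"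
proof -
  have "\<beta> 0 * ((1 - \<rho>) * \<rho> ^ d) \<le> \<beta> (shape_V h j) * ((1 - \<rho>) * \<rho> ^ d)"
    using shape_rate_bounds(1)[of h j] \<rho>_pos \<rho>_le by (intro mult_right_mono) auto
  then show ?thesis by (simp add: algebra_simps)
qed

lemma shape_generator_gauge_power_ge:
  assumes "h \<noteq> x"
  shows "shape_generator \<beta> (\<lambda>h. \<rho> ^ nat (target_gauge x h)) h
    \<ge> \<beta> 0 / 2 * \<rho> ^ (nat (target_gauge x h) - 1)"
proof -
  define t where "t j = \<beta> (shape_V h j)
    * (\<rho> ^ nat (target_gauge x (shape_move h j)) - \<rho> ^ nat (target_gauge x h))" for j
  have "target_gauge x h > 0"
    using target_gauge_eq_0[of x h] target_gauge_nonneg[of x h] \<open>h \<noteq> x\<close> by force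
  then obtain d where d: "nat (target_gauge x h) = Suc d"
    by (metis gr0_implies_Suc zero_less_nat_eq)
  obtain k where k: "k \<in> {1, 2, 3}" "target_gauge x (shape_move h k) = target_gauge x h - 1"
    using target_gauge_decreasing_move[OF \<open>h \<noteq> x\<close>] by blast
  have gauge_k: "nat (target_gauge x (shape_move h k)) = d"
    using k(2) d by (simp add: nat_diff_distrib)
  have decreasing_move: "\<beta> 0 * (1 - \<rho>) * \<rho> ^ d \<le> t k"
    unfolding t_def d gauge_k by (rule gauge_power_decrement_ge)
  have every_move: "- rate_sum * \<rho> ^ Suc d \<le> t j" for j
    unfolding t_def d by (rule gauge_power_increment_ge)
  have "shape_generator \<beta> (\<lambda>h. \<rho> ^ nat (target_gauge x h)) h = t 1 + t 2 + t 3"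
    by (simp add: shape_generator_def t_def)
  moreover have "\<beta> 0 * (1 - \<rho>) * \<rho> ^ d - 2 * rate_sum * \<rho> ^ Suc d \<le> t 1 + t 2 + t 3"
    using k(1) decreasing_move every_move[of 1] every_move[of 2] every_move[of 3] by auto
  moreover have "\<beta> 0 * (1 - \<rho>) * \<rho> ^ d = \<beta> 0 * \<rho> ^ d - \<beta> 0 * \<rho> * \<rho> ^ d"
    by (simp add: algebra_simps)
  moreover have "2 * rate_sum * \<rho> ^ Suc d = \<beta> 0 / 4 * \<rho> ^ d"
  proof -
    have "2 * rate_sum * \<rho> = \<beta> 0 / 4"
      using rate_sum_pos by (simp add: \<rho>_def)
    then show ?thesis
      by (simp add: mult_ac)
  qed
  moreover have "\<beta> 0 * \<rho> * \<rho> ^ d \<le> \<beta> 0 / 8 * \<rho> ^ d"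
    using \<rho>_le \<rho>_pos \<beta>0_pos by (intro mult_right_mono) auto
  moreover have "0 \<le> \<beta> 0 * \<rho> ^ d"
    using \<rho>_pos \<beta>0_pos by simp
  ultimately show ?thesis
    unfolding d diff_Suc_1 by linarith
qed

text \<open>The quadratic form has drift at most -1 where |p| + |q| \<ge> radius and at most
  3 rate_sum everywhere. Where |p| + |q| < radius the gauge is at most gauge_bound x, and the
  correction term, whose drift is negative off x, is weighted to contribute at most
  -(3 rate_sum + 1) there.\<close>

definition radius :: nat where
  "radius = nat \<lceil>(3 * rate_sum + 1) / drift_gap\<rceil>"

definition gauge_bound :: "int \<times> int \<Rightarrow> nat" where
  "gauge_bound x = nat (4 * (\<bar>fst x\<bar> + \<bar>snd x\<bar>) + 4 * int radius)"

definition correction_weight :: "int \<times> int \<Rightarrow> real" where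
  "correction_weight x = 2 * (3 * rate_sum + 1) / (\<beta> 0 * \<rho> ^ gauge_bound x)"

definition lyapunov :: "int \<times> int \<Rightarrow> int \<times> int \<Rightarrow> real" where
  "lyapunov x h = quad_form h + correction_weight x * (1 - \<rho> ^ nat (target_gauge x h))"

lemma correction_weight_pos: "correction_weight x > 0"
  using rate_sum_pos \<rho>_pos \<beta>0_pos by (simp add: correction_weight_def)

lemma lyapunov_nonneg: "lyapunov x h \<ge> 0"
proof -
  have "\<rho> ^ nat (target_gauge x h) \<le> 1"
    using \<rho>_pos \<rho>_le by (intro power_le_one) auto
  then show ?thesis
    using quad_form_nonneg[of h] correction_weight_pos[of x] by (simp add: lyapunov_def)
qed

lemma correction_weight_ge:
  assumes "\<bar>fst h\<bar> + \<bar>snd h\<bar> \<le> int radius"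
  shows "3 * rate_sum + 1 \<le> correction_weight x * (\<beta> 0 / 2 * \<rho> ^ (nat (target_gauge x h) - 1))"
proof -
  have "target_gauge x h \<le> 4 * (\<bar>fst x\<bar> + \<bar>snd x\<bar>) + 4 * int radius"
    using assms target_gauge_le[of x h, unfolded distrib_left] unfolding distrib_left by linarith
  then have "nat (target_gauge x h) \<le> gauge_bound x"
    unfolding gauge_bound_def by (rule nat_mono)
  then have "\<rho> ^ gauge_bound x \<le> \<rho> ^ (nat (target_gauge x h) - 1)"
    using \<rho>_pos \<rho>_le by (intro power_decreasing) auto
  then have "correction_weight x * (\<beta> 0 / 2 * \<rho> ^ gauge_bound x)
      \<le> correction_weight x * (\<beta> 0 / 2 * \<rho> ^ (nat (target_gauge x h) - 1))"
    using correction_weight_pos[of x] \<beta>0_pos by (intro mult_left_mono) auto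
  moreover have "correction_weight x * (\<beta> 0 / 2 * \<rho> ^ gauge_bound x) = 3 * rate_sum + 1"
    using \<beta>0_pos \<rho>_pos by (simp add: correction_weight_def)
  ultimately show ?thesis by simp
qed

lemma shape_generator_lyapunov_le:
  assumes "h \<noteq> x"
  shows "shape_generator \<beta> (lyapunov x) h \<le> -1"
proof -
  define A where "A = \<bar>real_of_int (fst h)\<bar> + \<bar>real_of_int (snd h)\<bar>"
  define C where "C = correction_weight x * (\<beta> 0 / 2 * \<rho> ^ (nat (target_gauge x h) - 1))"
  have split: "shape_generator \<beta> (lyapunov x) h = shape_generator \<beta> quad_form h
      - correction_weight x * shape_generator \<beta> (\<lambda>h. \<rho> ^ nat (target_gauge x h)) h"
    by (simp add: shape_generator_def lyapunov_def algebra_simps)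
  have quad: "shape_generator \<beta> quad_form h \<le> 3 * rate_sum - drift_gap * A"
    using shape_generator_quad_form_le[of h] by (simp add: A_def)
  have correction: "C \<le> correction_weight x * shape_generator \<beta> (\<lambda>h. \<rho> ^ nat (target_gauge x h)) h"
    unfolding C_def using shape_generator_gauge_power_ge[OF assms] correction_weight_pos[of x]
    by (intro mult_left_mono) auto
  show ?thesis
  proof (cases "drift_gap * A \<ge> 3 * rate_sum + 1")
    case True
    have "0 \<le> C"
      using correction_weight_pos[of x] \<beta>0_pos \<rho>_pos by (simp add: C_def)
    then show ?thesis using split quad correction True by linarith
  next
    case False
    then have "A < (3 * rate_sum + 1) / drift_gap"
      using drift_gap_pos by (simp add: field_simps)
    also have "\<dots> \<le> real radius"
      unfolding radius_def by linarith
    finally have "\<bar>fst h\<bar> + \<bar>snd h\<bar> \<le> int radius"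
      by (simp add: A_def)
    then have "3 * rate_sum + 1 \<le> C"
      unfolding C_def by (rule correction_weight_ge)
    moreover have "0 \<le> drift_gap * A"
      using drift_gap_pos by (simp add: A_def)
    ultimately show ?thesis using split quad correction by linarith
  qed
qed

lemma lyapunov_jump_chain_drift:
  assumes "h \<noteq> x"
  shows "ennreal (1 / (3 * rate_sum)) + (\<Sum>\<^sub>\<infinity>z. jump_prob (shape_Q \<beta>) h z * ennreal (lyapunov x z))
    \<le> ennreal (lyapunov x h)"
proof -
  define T where "T = shape_total_rate \<beta> h"
  define W where "W = \<beta> (shape_V h 1) * lyapunov x (shape_move h 1)
    + \<beta> (shape_V h 2) * lyapunov x (shape_move h 2) + \<beta> (shape_V h 3) * lyapunov x (shape_move h 3)"
  have "T > 0" "T \<le> 3 * rate_sum"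
    using shape_total_rate_pos[of h] shape_total_rate_bounds(2)[of h] by (simp_all add: T_def)
  have "W = T * lyapunov x h + shape_generator \<beta> (lyapunov x) h"
    by (simp add: W_def T_def shape_total_rate_def shape_generator_def algebra_simps)
  then have "W \<le> T * lyapunov x h - 1"
    using shape_generator_lyapunov_le[OF assms] by linarith
  then have "W / T \<le> (T * lyapunov x h - 1) / T"
    using \<open>T > 0\<close> by (simp add: divide_right_mono)
  also have "\<dots> = lyapunov x h - 1 / T"
    using \<open>T > 0\<close> by (simp add: field_simps)
  finally have "W / T \<le> lyapunov x h - 1 / T" .
  moreover have "1 / (3 * rate_sum) \<le> 1 / T"
    using \<open>T > 0\<close> \<open>T \<le> 3 * rate_sum\<close> by (simp add: frac_le)
  ultimately have "1 / (3 * rate_sum) + W / T \<le> lyapunov x h"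
    by linarith
  moreover have "W \<ge> 0"
    unfolding W_def using lyapunov_nonneg shape_rate_pos[of h]
    by (intro add_nonneg_nonneg mult_nonneg_nonneg) (simp_all add: less_imp_le)
  moreover have "(\<Sum>\<^sub>\<infinity>z. jump_prob (shape_Q \<beta>) h z * ennreal (lyapunov x z)) = ennreal (W / T)"
    unfolding W_def T_def by (rule infsum_jump_prob_shape_Q) (rule lyapunov_nonneg)
  ultimately show ?thesis
    using rate_sum_pos \<open>T > 0\<close> by (simp add: ennreal_plus[symmetric] ennreal_leI del: ennreal_plus)
qed

lemma shape_Q_positive_recurrent: "positive_recurrent_state (shape_Q \<beta>) x"
proof (rule positive_recurrent_state_if_drift[where U = "\<lambda>z. ennreal (lyapunov x z)"
      and e = "1 / (3 * rate_sum)" and c = "3 * \<beta> 0"])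
  show "(\<Sum>\<^sub>\<infinity>z. jump_prob (shape_Q \<beta>) x z * ennreal (lyapunov x z)) < top"
    by (simp add: infsum_jump_prob_shape_Q lyapunov_nonneg)
  show "ennreal (3 * \<beta> 0) \<le> total_rate (shape_Q \<beta>) z" for z
    using shape_total_rate_bounds(1)[of z] by (simp add: total_rate_shape_Q ennreal_leI)
qed (use jump_prob_shape_Q_stochastic lyapunov_jump_chain_drift rate_sum_pos \<beta>0_pos in auto)

end

theorem corollary7:
  fixes \<beta> :: "nat \<Rightarrow> real"
  assumes "\<beta> 0 > 0" and "\<beta> 1 > 0" and "\<beta> 2 > 0"
    and "\<beta> 1 > \<beta> 0" and "\<beta> 2 > \<beta> 0"
  shows "ctmc_ergodic (shape_Q \<beta>)"
proof -
  interpret crystal_rates \<beta>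
    using assms by unfold_locales
  show ?thesis
    unfolding ctmc_ergodic_def using shape_Q_irreducible shape_Q_positive_recurrent by blast
qed

end
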